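(* Let $\mathcal{D}$ be a distribution on $\mathcal{X}$, $f:\mathcal{X}\to\mathbb{R}$, $\mathcal{H}$ a class of functions $h:\mathcal{X}\to\mathbb{R}$, $l(h,x)=|f(x)-h(x)|$, $m$ a positive integer and $e>0$, and assume that for every $h\in\mathcal{H}$ and every $x_1,\dots,x_m$ drawn from $\mathcal{D}$, $\frac{1}{m}\sum_{i=1}^m (f(x_i)-h(x_i))^2\le e^2$. Define $$\phi(x_1,\dots,x_m)=\sup_{h\in\mathcal{H}}\Big(L(h)-\frac{1}{m}\sum_{i=1}^m|f(x_i)-h(x_i)|\Big).$$ Then for every $\delta\in(0,1)$, with probability at least $1-\delta$ over $x_1,\dots,x_m$ drawn i.i.d. from $\mathcal{D}$, $$\phi(x_1,\dots,x_m)\le \mathrm{E}_{\bm{x}\sim\mathcal{D}}[\phi(x_1,\dots,x_m)]+e\sqrt{\frac{2\log(2/\delta)}{m}}.$$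
   Context: $L(h)=\mathrm{E}_{x\sim\mathcal{D}}[|f(x)-h(x)|]$ is the generalization error. *)

theory Defs
  imports "HOL-Probability.Probability"
begin

definition gen_err :: "'a measure \<Rightarrow> ('a \<Rightarrow> real) \<Rightarrow> ('a \<Rightarrow> real) \<Rightarrow> real" where
  "gen_err D f h = (\<integral>x. \<bar>f x - h x\<bar> \<partial>D)"

definition phi :: "'a measure \<Rightarrow> ('a \<Rightarrow> real) \<Rightarrow> ('a \<Rightarrow> real) set \<Rightarrow> nat \<Rightarrow> (nat \<Rightarrow> 'a) \<Rightarrow> real" where
  "phi D f H m xs = (SUP h\<in>H. gen_err D f h - (\<Sum>i<m. \<bar>f (xs i) - h (xs i)\<bar>) / real m)"

end

theory Submission
  imports Defs
begin

text \<open>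
  Applied to a constant sample, the hypothesis gives \<open>\<bar>f x - h x\<bar> \<le> e\<close> pointwise, so replacing
  one sample point changes every empirical error by at most \<open>e / m\<close>; hence the supremum \<open>phi\<close>
  has bounded differences \<open>c\<^sub>i = e / m\<close>. McDiarmid's inequality then bounds the upper tail at
  \<open>t = e * sqrt (2 * ln (2 / \<delta>) / m)\<close> by \<open>exp (-2 * t\<^sup>2 / (\<Sum>i. c\<^sub>i\<^sup>2)) = (\<delta> / 2)\<^sup>4 \<le> \<delta>\<close>.
  McDiarmid's inequality itself follows by the Chernoff method: the moment generating function is
  bounded by integrating out one coordinate at a time, since every partial average inherits the
  bounded differences and Hoeffding's lemma bounds the remaining one-dimensional integral.
\<close>

definition bounded_differences ::
    "('i \<Rightarrow> 'a) set \<Rightarrow> 'i set \<Rightarrow> (('i \<Rightarrow> 'a) \<Rightarrow> real) \<Rightarrow> ('i \<Rightarrow> real) \<Rightarrow> bool" where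
  "bounded_differences S I g c \<longleftrightarrow>
     (\<forall>i\<in>I. \<forall>x\<in>S. \<forall>y\<in>S. (\<forall>j\<in>I - {i}. x j = y j) \<longrightarrow> \<bar>g x - g y\<bar> \<le> c i)"

lemma bounded_differencesD:
  assumes "bounded_differences S I g c" "i \<in> I" "x \<in> S" "y \<in> S"
    and "\<And>j. j \<in> I \<Longrightarrow> j \<noteq> i \<Longrightarrow> x j = y j"
  shows "\<bar>g x - g y\<bar> \<le> c i"
  using assms unfolding bounded_differences_def by blast

lemma bounded_differences_diff_le_sum:
  assumes bd: "bounded_differences (Pi\<^sub>E I A) I g c" and "finite I"
    and x: "x \<in> Pi\<^sub>E I A" and y: "y \<in> Pi\<^sub>E I A"
  shows "\<bar>g x - g y\<bar> \<le> (\<Sum>i\<in>I. c i)"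
proof -
  define mix where "mix J = (\<lambda>i. if i \<in> J then y i else x i)" for J
  have "mix J \<in> Pi\<^sub>E I A \<and> \<bar>g x - g (mix J)\<bar> \<le> (\<Sum>i\<in>J. c i)" if "J \<subseteq> I" for J
    using finite_subset[OF that \<open>finite I\<close>] that
  proof (induction J rule: finite_induct)
    case empty
    then show ?case using x by (simp add: mix_def)
  next
    case (insert k J)
    have mix_k: "mix (insert k J) \<in> Pi\<^sub>E I A"
      using x y insert.prems by (auto simp: mix_def PiE_iff extensional_def)
    have IH: "mix J \<in> Pi\<^sub>E I A" "\<bar>g x - g (mix J)\<bar> \<le> (\<Sum>i\<in>J. c i)"
      using insert by auto
    have "\<bar>g (mix J) - g (mix (insert k J))\<bar> \<le> c k"
      using insert IH(1) mix_k by (intro bounded_differencesD[OF bd]) (auto simp: mix_def)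
    then have "\<bar>g x - g (mix (insert k J))\<bar> \<le> c k + (\<Sum>i\<in>J. c i)"
      using IH(2) by linarith
    with mix_k show ?case using insert.hyps by simp
  qed
  moreover have "mix I = y"
    using x y by (auto simp: mix_def PiE_def extensional_def)
  ultimately show ?thesis by force
qed

lemma bounded_differences_sum:
  fixes u :: "'i \<Rightarrow> 'a \<Rightarrow> real"
  assumes "finite I" and u: "\<And>i a b. i \<in> I \<Longrightarrow> a \<in> A i \<Longrightarrow> b \<in> A i \<Longrightarrow> \<bar>u i a - u i b\<bar> \<le> c i"
  shows "bounded_differences (Pi\<^sub>E I A) I (\<lambda>x. \<Sum>i\<in>I. u i (x i)) c"
  unfolding bounded_differences_def
proof (intro ballI impI)
  fix i x y
  assume i: "i \<in> I" and x: "x \<in> Pi\<^sub>E I A" and y: "y \<in> Pi\<^sub>E I A" and eq: "\<forall>j\<in>I - {i}. x j = y j"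
  have "(\<Sum>j\<in>I. u j (x j)) - (\<Sum>j\<in>I. u j (y j)) = (\<Sum>j\<in>I. u j (x j) - u j (y j))"
    by (simp add: sum_subtractf)
  also have "\<dots> = u i (x i) - u i (y i)"
    using eq by (simp add: sum.remove[OF \<open>finite I\<close> i])
  finally show "\<bar>(\<Sum>j\<in>I. u j (x j)) - (\<Sum>j\<in>I. u j (y j))\<bar> \<le> c i"
    using u[OF i] i x y by (simp add: PiE_mem)
qed

lemma bounded_differences_SUP:
  fixes F :: "'b \<Rightarrow> ('i \<Rightarrow> 'a) \<Rightarrow> real"
  assumes "H \<noteq> {}" and bd: "\<And>h. h \<in> H \<Longrightarrow> bounded_differences S I (F h) c"
    and bdd: "\<And>x. x \<in> S \<Longrightarrow> bdd_above ((\<lambda>h. F h x) ` H)"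
  shows "bounded_differences S I (\<lambda>x. SUP h\<in>H. F h x) c"
proof -
  have le: "(SUP h\<in>H. F h x) \<le> (SUP h\<in>H. F h y) + c i"
    if "i \<in> I" "x \<in> S" "y \<in> S" "\<forall>j\<in>I - {i}. x j = y j" for i x y
  proof (rule cSUP_least[OF \<open>H \<noteq> {}\<close>])
    fix h assume h: "h \<in> H"
    have "\<bar>F h x - F h y\<bar> \<le> c i"
      by (rule bounded_differencesD[OF bd[OF h] that(1-3)]) (use that(4) in auto)
    then have "F h x \<le> F h y + c i" by linarith
    also have "F h y \<le> (SUP h\<in>H. F h y)"
      by (rule cSUP_upper[OF h bdd[OF \<open>y \<in> S\<close>]])
    finally show "F h x \<le> (SUP h\<in>H. F h y) + c i" by simp
  qed
  show ?thesis
    unfolding bounded_differences_def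
  proof (intro ballI impI)
    fix i x y assume "i \<in> I" "x \<in> S" "y \<in> S" and eq: "\<forall>j\<in>I - {i}. x j = y j"
    moreover from eq have "\<forall>j\<in>I - {i}. y j = x j" by simp
    ultimately show "\<bar>(SUP h\<in>H. F h x) - (SUP h\<in>H. F h y)\<bar> \<le> c i"
      using le[of i x y] le[of i y x] by linarith
  qed
qed

lemma Hoeffdings_lemma_oscillation:
  fixes u :: "'a \<Rightarrow> real"
  assumes N: "prob_space N" and u: "u \<in> borel_measurable N" and "l > 0"
    and osc: "\<And>y y'. y \<in> space N \<Longrightarrow> y' \<in> space N \<Longrightarrow> \<bar>u y - u y'\<bar> \<le> d"
  shows "(\<integral>\<^sup>+y. exp (l * (u y - (\<integral>z. u z \<partial>N))) \<partial>N) \<le> ennreal (exp (l\<^sup>2 * d\<^sup>2 / 8))"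
proof -
  interpret prob_space N by (fact N)
  obtain y0 where y0: "y0 \<in> space N" using not_empty by blast
  have bdd: "bdd_below (u ` space N)"
    by (rule bdd_belowI2[where m = "u y0 - d"]) (use osc[OF _ y0] in \<open>force simp: abs_le_iff\<close>)
  define a where "a = (INF y\<in>space N. u y)"
  have "u y \<in> {a..a + d}" if y: "y \<in> space N" for y
  proof -
    have "a \<le> u y" unfolding a_def by (rule cINF_lower[OF bdd y])
    moreover have "u y - d \<le> a" unfolding a_def
      by (rule cINF_greatest[OF not_empty]) (use osc[OF y] in \<open>force simp: abs_le_iff\<close>)
    ultimately show ?thesis by simp
  qed
  then interpret interval_bounded_random_variable N u a "a + d"
    by unfold_locales (auto simp: u)
  show ?thesis using Hoeffdings_lemma_nn_integral[OF \<open>l > 0\<close>] by simp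
qed

lemma bounded_differences_integral_update:
  assumes Mk: "prob_space (M k)" and "k \<notin> J"
    and bd: "bounded_differences (space (PiM (insert k J) M)) (insert k J) g c"
    and int: "\<And>x. x \<in> space (PiM J M) \<Longrightarrow> integrable (M k) (\<lambda>y. g (x(k := y)))"
  shows "bounded_differences (space (PiM J M)) J (\<lambda>x. \<integral>y. g (x(k := y)) \<partial>M k) c"
  unfolding bounded_differences_def
proof (intro ballI impI)
  fix i x x'
  assume i: "i \<in> J" and x: "x \<in> space (PiM J M)" and x': "x' \<in> space (PiM J M)"
    and eq: "\<forall>j\<in>J - {i}. x j = x' j"
  have "\<bar>g (x(k := y)) - g (x'(k := y))\<bar> \<le> c i" if y: "y \<in> space (M k)" for y
    using x x' y i eq \<open>k \<notin> J\<close>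
    by (intro bounded_differencesD[OF bd]) (auto simp: space_PiM PiE_fun_upd)
  then have "(\<integral>y. \<bar>g (x(k := y)) - g (x'(k := y))\<bar> \<partial>M k) \<le> c i"
    using int[OF x] int[OF x'] by (intro prob_space.integral_le_const[OF Mk]) auto
  then show "\<bar>(\<integral>y. g (x(k := y)) \<partial>M k) - (\<integral>y. g (x'(k := y)) \<partial>M k)\<bar> \<le> c i"
    using integral_abs_bound[of "M k" "\<lambda>y. g (x(k := y)) - g (x'(k := y))"] int[OF x] int[OF x']
    by simp
qed

lemma Hoeffdings_lemma_oscillation_shift:
  fixes u :: "'a \<Rightarrow> real"
  assumes N: "prob_space N" and u: "integrable N u" and "l > 0"
    and osc: "\<And>y y'. y \<in> space N \<Longrightarrow> y' \<in> space N \<Longrightarrow> \<bar>u y - u y'\<bar> \<le> d"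
  shows "(\<integral>\<^sup>+y. exp (l * (u y - \<mu>)) \<partial>N)
           \<le> ennreal (exp (l * ((\<integral>z. u z \<partial>N) - \<mu>))) * ennreal (exp (l\<^sup>2 * d\<^sup>2 / 8))"
proof -
  let ?E = "\<integral>z. u z \<partial>N"
  have "(\<integral>\<^sup>+y. exp (l * (u y - \<mu>)) \<partial>N)
      = (\<integral>\<^sup>+y. ennreal (exp (l * (?E - \<mu>))) * exp (l * (u y - ?E)) \<partial>N)"
    by (intro nn_integral_cong) (simp add: ennreal_mult' [symmetric] exp_add [symmetric] algebra_simps)
  also have "\<dots> = ennreal (exp (l * (?E - \<mu>))) * (\<integral>\<^sup>+y. exp (l * (u y - ?E)) \<partial>N)"
    using u by (intro nn_integral_cmult) auto
  also have "(\<integral>\<^sup>+y. exp (l * (u y - ?E)) \<partial>N) \<le> ennreal (exp (l\<^sup>2 * d\<^sup>2 / 8))"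
    using borel_measurable_integrable[OF u] by (rule Hoeffdings_lemma_oscillation[OF N _ \<open>l > 0\<close> osc])
  finally show ?thesis by (simp add: mult_left_mono)
qed

lemma bounded_differences_bounded:
  assumes M: "\<And>i. prob_space (M i)" and "finite I"
    and bd: "bounded_differences (space (PiM I M)) I g c"
  obtains B where "\<And>z. z \<in> space (PiM I M) \<Longrightarrow> \<bar>g z\<bar> \<le> B"
proof -
  interpret prob_space "PiM I M" by (intro prob_space_PiM M)
  obtain z0 where z0: "z0 \<in> space (PiM I M)" using not_empty by blast
  have "\<bar>g z\<bar> \<le> \<bar>g z0\<bar> + (\<Sum>i\<in>I. c i)" if "z \<in> space (PiM I M)" for z
    using bounded_differences_diff_le_sum[of I _ g c z z0] bd that z0 \<open>finite I\<close>
    unfolding space_PiM by fastforce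
  then show ?thesis by (rule that)
qed

lemma integrable_section_PiM:
  fixes g :: "('i \<Rightarrow> 'a) \<Rightarrow> real"
  assumes "prob_space (M k)" and "k \<notin> J" and x: "x \<in> space (PiM J M)"
    and g: "g \<in> borel_measurable (PiM (insert k J) M)"
    and B: "\<And>z. z \<in> space (PiM (insert k J) M) \<Longrightarrow> \<bar>g z\<bar> \<le> B"
  shows "integrable (M k) (\<lambda>y. g (x(k := y)))"
proof -
  interpret prob_space "M k" by fact
  have "(\<lambda>y. g (x(k := y))) \<in> borel_measurable (M k)"
    using measurable_comp[OF measurable_component_update g, OF x \<open>k \<notin> J\<close>]
    unfolding comp_def .
  moreover have "x(k := y) \<in> space (PiM (insert k J) M)" if "y \<in> space (M k)" for y
    using x that by (simp add: space_PiM PiE_fun_upd)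
  ultimately show ?thesis
    using B by (intro integrable_const_bound[where B = B]) auto
qed

lemma mcdiarmid_mgf_le:
  fixes g :: "('i \<Rightarrow> 'a) \<Rightarrow> real"
  assumes M: "\<And>i. prob_space (M i)" and "finite I" and "l > 0"
    and "g \<in> borel_measurable (PiM I M)"
    and "bounded_differences (space (PiM I M)) I g c"
  shows "(\<integral>\<^sup>+x. exp (l * (g x - (\<integral>z. g z \<partial>PiM I M))) \<partial>PiM I M)
           \<le> ennreal (exp (l\<^sup>2 * (\<Sum>i\<in>I. (c i)\<^sup>2) / 8))"
  using \<open>finite I\<close> assms(4,5)
proof (induction I arbitrary: g rule: finite_induct)
  case empty
  then show ?case
    by (simp add: PiM_empty nn_integral_count_space_finite lebesgue_integral_count_space_finite)
next
  case (insert k J g)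
  interpret product_sigma_finite M
    by (simp add: product_sigma_finite_def M prob_space_imp_sigma_finite)
  let ?P = "PiM (insert k J) M" and ?Q = "PiM J M"
  note g[measurable] = insert.prems(1) and bd = insert.prems(2)
  have upd: "x(k := y) \<in> space ?P" if "x \<in> space ?Q" "y \<in> space (M k)" for x y
    using that by (simp add: space_PiM PiE_fun_upd)
  obtain B where B: "\<And>z. z \<in> space ?P \<Longrightarrow> \<bar>g z\<bar> \<le> B"
    using bounded_differences_bounded[OF M finite.insertI[OF insert.hyps(1)] bd] by metis
  have section_int: "integrable (M k) (\<lambda>y. g (x(k := y)))" if "x \<in> space ?Q" for x
    using M insert.hyps(2) that g B by (rule integrable_section_PiM)
  define h where "h x = (\<integral>y. g (x(k := y)) \<partial>M k)" for x
  have h[measurable]: "h \<in> borel_measurable ?Q"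
    unfolding h_def by measurable
  define \<mu> where "\<mu> = (\<integral>z. h z \<partial>?Q)"
  have "bounded_differences (space ?Q) J h c"
    unfolding h_def using M insert.hyps(2) bd section_int by (rule bounded_differences_integral_update)
  with h have IH: "(\<integral>\<^sup>+x. exp (l * (h x - \<mu>)) \<partial>?Q) \<le> ennreal (exp (l\<^sup>2 * (\<Sum>i\<in>J. (c i)\<^sup>2) / 8))"
    unfolding \<mu>_def by (rule insert.IH)
  interpret P: prob_space ?P by (intro prob_space_PiM M)
  have "integrable ?P g"
    using B by (intro P.integrable_const_bound[where B = B]) auto
  then have \<mu>: "(\<integral>z. g z \<partial>?P) = \<mu>"
    unfolding \<mu>_def h_def by (rule product_integral_insert[OF insert.hyps(1,2)])
  have section_mgf: "(\<integral>\<^sup>+y. exp (l * (g (x(k := y)) - \<mu>)) \<partial>M k)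
      \<le> ennreal (exp (l * (h x - \<mu>))) * ennreal (exp (l\<^sup>2 * (c k)\<^sup>2 / 8))"
    if x: "x \<in> space ?Q" for x
    unfolding h_def
  proof (rule Hoeffdings_lemma_oscillation_shift[OF M section_int[OF x] \<open>l > 0\<close>])
    fix y y' assume "y \<in> space (M k)" "y' \<in> space (M k)"
    then show "\<bar>g (x(k := y)) - g (x(k := y'))\<bar> \<le> c k"
      by (intro bounded_differencesD[OF bd] upd[OF x]) auto
  qed
  have "(\<integral>\<^sup>+z. exp (l * (g z - (\<integral>z. g z \<partial>?P))) \<partial>?P)
      = (\<integral>\<^sup>+x. (\<integral>\<^sup>+y. exp (l * (g (x(k := y)) - \<mu>)) \<partial>M k) \<partial>?Q)"
    unfolding \<mu> by (rule product_nn_integral_insert[OF insert.hyps(1,2)]) measurable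
  also have "\<dots> \<le> (\<integral>\<^sup>+x. ennreal (exp (l * (h x - \<mu>))) * ennreal (exp (l\<^sup>2 * (c k)\<^sup>2 / 8)) \<partial>?Q)"
    by (intro nn_integral_mono section_mgf)
  also have "\<dots> = (\<integral>\<^sup>+x. exp (l * (h x - \<mu>)) \<partial>?Q) * ennreal (exp (l\<^sup>2 * (c k)\<^sup>2 / 8))"
    by (rule nn_integral_multc) measurable
  also have "\<dots> \<le> ennreal (exp (l\<^sup>2 * (\<Sum>i\<in>J. (c i)\<^sup>2) / 8)) * ennreal (exp (l\<^sup>2 * (c k)\<^sup>2 / 8))"
    using IH by (rule mult_right_mono) simp
  also have "\<dots> = ennreal (exp (l\<^sup>2 * (\<Sum>i\<in>insert k J. (c i)\<^sup>2) / 8))"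
    using insert.hyps
    by (simp add: ennreal_mult' [symmetric] exp_add [symmetric] algebra_simps add_divide_distrib)
  finally show ?case .
qed

theorem mcdiarmid_inequality:
  fixes g :: "('i \<Rightarrow> 'a) \<Rightarrow> real"
  assumes M: "\<And>i. prob_space (M i)" and "finite I" and g[measurable]: "g \<in> borel_measurable (PiM I M)"
    and "bounded_differences (space (PiM I M)) I g c" and "t \<ge> 0"
  shows "measure (PiM I M) {x \<in> space (PiM I M). (\<integral>z. g z \<partial>PiM I M) + t \<le> g x}
           \<le> exp (-2 * t\<^sup>2 / (\<Sum>i\<in>I. (c i)\<^sup>2))"
proof -
  interpret P: prob_space "PiM I M" by (intro prob_space_PiM M)
  define d where "d = (\<Sum>i\<in>I. (c i)\<^sup>2)"
  define \<mu> where "\<mu> = (\<integral>z. g z \<partial>PiM I M)"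
  show ?thesis
  proof (cases "t > 0 \<and> d > 0")
    case False
    moreover have "d \<ge> 0" unfolding d_def by (simp add: sum_nonneg)
    ultimately have "t = 0 \<or> d = 0" using \<open>t \<ge> 0\<close> by linarith
    then show ?thesis by (auto simp: d_def)
  next
    case True
    define l where "l = 4 * t / d"
    have "l > 0" unfolding l_def using True by simp
    have "{x \<in> space (PiM I M). \<mu> + t \<le> g x} = {x \<in> space (PiM I M). g x - \<mu> \<ge> t}"
      by (auto simp: algebra_simps)
    then have "ennreal (measure (PiM I M) {x \<in> space (PiM I M). \<mu> + t \<le> g x})
        = emeasure (PiM I M) {x \<in> space (PiM I M). g x - \<mu> \<ge> t}"
      by (simp add: P.emeasure_eq_measure)
    also have "\<dots> \<le> ennreal (exp (-l * t)) * (\<integral>\<^sup>+x\<in>space (PiM I M). exp (l * (g x - \<mu>)) \<partial>PiM I M)"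
      by (intro Chernoff_ineq_nn_integral_ge \<open>l > 0\<close>) auto
    also have "(\<integral>\<^sup>+x\<in>space (PiM I M). exp (l * (g x - \<mu>)) \<partial>PiM I M)
        = (\<integral>\<^sup>+x. exp (l * (g x - \<mu>)) \<partial>PiM I M)"
      by (auto intro!: nn_integral_cong)
    also have "ennreal (exp (-l * t)) * \<dots> \<le> ennreal (exp (-l * t)) * ennreal (exp (l\<^sup>2 * d / 8))"
      unfolding \<mu>_def d_def by (intro mult_left_mono mcdiarmid_mgf_le M assms \<open>l > 0\<close>) simp
    also have "\<dots> = ennreal (exp (-2 * t\<^sup>2 / d))"
      using True by (simp add: l_def ennreal_mult' [symmetric] exp_add [symmetric] field_simps power2_eq_square)
    finally show ?thesis
      by (subst (asm) ennreal_le_iff) (simp_all add: \<mu>_def d_def)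
  qed
qed

corollary mcdiarmid_inequality_compl:
  fixes g :: "('i \<Rightarrow> 'a) \<Rightarrow> real"
  assumes M: "\<And>i. prob_space (M i)" and "finite I" and g[measurable]: "g \<in> borel_measurable (PiM I M)"
    and "bounded_differences (space (PiM I M)) I g c" and "t \<ge> 0"
  shows "measure (PiM I M) {x \<in> space (PiM I M). g x \<le> (\<integral>z. g z \<partial>PiM I M) + t}
           \<ge> 1 - exp (-2 * t\<^sup>2 / (\<Sum>i\<in>I. (c i)\<^sup>2))"
proof -
  interpret P: prob_space "PiM I M" by (intro prob_space_PiM M)
  define \<mu> where "\<mu> = (\<integral>z. g z \<partial>PiM I M)"
  let ?tail = "{x \<in> space (PiM I M). \<mu> + t < g x}"
  have "{x \<in> space (PiM I M). g x \<le> \<mu> + t} = space (PiM I M) - ?tail"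
    by auto
  then have "measure (PiM I M) {x \<in> space (PiM I M). g x \<le> \<mu> + t} = 1 - measure (PiM I M) ?tail"
    by (simp add: P.prob_compl)
  moreover have "measure (PiM I M) ?tail \<le> measure (PiM I M) {x \<in> space (PiM I M). \<mu> + t \<le> g x}"
    by (rule P.finite_measure_mono) auto
  moreover have "\<dots> \<le> exp (-2 * t\<^sup>2 / (\<Sum>i\<in>I. (c i)\<^sup>2))"
    unfolding \<mu>_def by (rule mcdiarmid_inequality[OF assms])
  ultimately show ?thesis unfolding \<mu>_def by linarith
qed

lemma abs_le_of_mean_square_le:
  fixes u :: "'a \<Rightarrow> real"
  assumes "m > 0" and "e \<ge> 0" and "x \<in> A"
    and mean_sq: "\<And>xs. \<forall>i<m. xs i \<in> A \<Longrightarrow> (\<Sum>i<m. (u (xs i))\<^sup>2) / real m \<le> e\<^sup>2"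
  shows "\<bar>u x\<bar> \<le> e"
proof -
  have "(u x)\<^sup>2 \<le> e\<^sup>2"
    using mean_sq[of "\<lambda>_. x"] \<open>x \<in> A\<close> \<open>m > 0\<close> by simp
  then show ?thesis
    using \<open>e \<ge> 0\<close> by (simp add: abs_le_square_iff[symmetric])
qed

lemma gen_err_le:
  assumes D: "prob_space D" and [measurable]: "f \<in> borel_measurable D" "h \<in> borel_measurable D"
    and fh: "\<And>x. x \<in> space D \<Longrightarrow> \<bar>f x - h x\<bar> \<le> e"
  shows "gen_err D f h \<le> e"
proof -
  interpret prob_space D by (fact D)
  have "integrable D (\<lambda>x. \<bar>f x - h x\<bar>)"
    using fh by (intro integrable_const_bound[where B = e]) auto
  then show ?thesis
    unfolding gen_err_def using fh by (intro integral_le_const) auto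
qed

lemma phi_bounded_differences:
  assumes D: "prob_space D" and f: "f \<in> borel_measurable D"
    and H: "\<And>h. h \<in> H \<Longrightarrow> h \<in> borel_measurable D"
    and "m > 0" and "e \<ge> 0" and fh: "\<And>h x. h \<in> H \<Longrightarrow> x \<in> space D \<Longrightarrow> \<bar>f x - h x\<bar> \<le> e"
  shows "bounded_differences (space (PiM {..<m} (\<lambda>_. D))) {..<m} (phi D f H m) (\<lambda>_. e / real m)"
proof (cases "H = {}")
  case True
  then show ?thesis using \<open>e \<ge> 0\<close> by (simp add: bounded_differences_def phi_def)
next
  case False
  let ?S = "space (PiM {..<m} (\<lambda>_. D))"
  define loss where "loss h xs = (\<Sum>i<m. \<bar>f (xs i) - h (xs i)\<bar>)" for h xs
  have loss_bd: "bounded_differences ?S {..<m} (loss h) (\<lambda>_. e)" if h: "h \<in> H" for h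
    unfolding space_PiM loss_def
  proof (rule bounded_differences_sum)
    fix a b assume "a \<in> space D" "b \<in> space D"
    then have "\<bar>f a - h a\<bar> \<le> e" "\<bar>f b - h b\<bar> \<le> e" by (simp_all add: fh[OF h])
    then show "\<bar>\<bar>f a - h a\<bar> - \<bar>f b - h b\<bar>\<bar> \<le> e" by linarith
  qed simp
  have bd: "bounded_differences ?S {..<m} (\<lambda>xs. gen_err D f h - loss h xs / real m) (\<lambda>_. e / real m)"
    if h: "h \<in> H" for h
    unfolding bounded_differences_def
  proof (intro ballI impI)
    fix i x y assume "i \<in> {..<m}" "x \<in> ?S" "y \<in> ?S" "\<forall>j\<in>{..<m} - {i}. x j = y j"
    then have "\<bar>loss h x - loss h y\<bar> \<le> e"
      by (intro bounded_differencesD[OF loss_bd[OF h]]) auto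
    then have "\<bar>loss h x - loss h y\<bar> / real m \<le> e / real m"
      by (rule divide_right_mono) simp
    then show "\<bar>(gen_err D f h - loss h x / real m) - (gen_err D f h - loss h y / real m)\<bar> \<le> e / real m"
      by (simp add: abs_minus_commute diff_divide_distrib[symmetric])
  qed
  have "gen_err D f h - loss h xs / real m \<le> e" if "h \<in> H" for h xs
  proof -
    have "0 \<le> loss h xs / real m" by (simp add: loss_def sum_nonneg)
    then show ?thesis using gen_err_le[OF D f H[OF that] fh[OF that]] by linarith
  qed
  then have bdd: "bdd_above ((\<lambda>h. gen_err D f h - loss h xs / real m) ` H)" for xs
    by (intro bdd_aboveI) blast
  have "phi D f H m = (\<lambda>xs. SUP h\<in>H. gen_err D f h - loss h xs / real m)"
    by (simp add: phi_def loss_def fun_eq_iff)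
  with bounded_differences_SUP[OF False bd bdd] show ?thesis by simp
qed

theorem lemma1:
  fixes D :: "'a measure" and f :: "'a \<Rightarrow> real" and H :: "('a \<Rightarrow> real) set"
    and m :: nat and e \<delta> :: real
  assumes "prob_space D"
    and "f \<in> borel_measurable D"
    and "\<And>h. h \<in> H \<Longrightarrow> h \<in> borel_measurable D"
    and "m > 0" and "e > 0"
    and "\<And>h xs. h \<in> H \<Longrightarrow> (\<forall>i<m. xs i \<in> space D) \<Longrightarrow>
           (\<Sum>i<m. (f (xs i) - h (xs i))\<^sup>2) / real m \<le> e\<^sup>2"
    and "phi D f H m \<in> borel_measurable (PiM {..<m} (\<lambda>_. D))"
    and "0 < \<delta>" and "\<delta> < 1"
  shows "measure (PiM {..<m} (\<lambda>_. D))
           {xs \<in> space (PiM {..<m} (\<lambda>_. D)).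
              phi D f H m xs \<le> (\<integral>ys. phi D f H m ys \<partial>(PiM {..<m} (\<lambda>_. D)))
                                + e * sqrt (2 * ln (2 / \<delta>) / real m)}
         \<ge> 1 - \<delta>"
proof -
  let ?P = "PiM {..<m} (\<lambda>_. D)"
  define L where "L = ln (2 / \<delta>)"
  define t where "t = e * sqrt (2 * L / real m)"
  have "L > 0" unfolding L_def using assms(8,9) by simp
  have "\<bar>f x - h x\<bar> \<le> e" if "h \<in> H" "x \<in> space D" for h x
    using abs_le_of_mean_square_le[of m e x "space D" "\<lambda>x. f x - h x"] assms(4-6) that by simp
  then have "bounded_differences (space ?P) {..<m} (phi D f H m) (\<lambda>_. e / real m)"
    using assms(1-5) by (intro phi_bounded_differences) auto
  then have "measure ?P {xs \<in> space ?P. phi D f H m xs \<le> (\<integral>ys. phi D f H m ys \<partial>?P) + t}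
      \<ge> 1 - exp (-2 * t\<^sup>2 / (\<Sum>i<m. (e / real m)\<^sup>2))"
    using assms(1,5,7) \<open>L > 0\<close> by (intro mcdiarmid_inequality_compl) (auto simp: t_def)
  moreover have "exp (-2 * t\<^sup>2 / (\<Sum>i<m. (e / real m)\<^sup>2)) = exp (-4 * L)"
    using assms(4,5) \<open>L > 0\<close> by (simp add: t_def power_mult_distrib field_simps power2_eq_square)
  moreover have "exp (-4 * L) \<le> exp (- L)"
    using \<open>L > 0\<close> by simp
  moreover have "exp (- L) = \<delta> / 2"
    unfolding L_def using assms(8) by (simp add: exp_minus)
  ultimately show ?thesis
    using assms(8) unfolding t_def L_def by linarith
qed

end
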